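(* Let $\Gamma=(W,F,\succ_W,\succ_F)$ be a matching market and let $T=(V,E,W)$ be a technology tree in which every worker $w\in W$ is a specialist. If the firms have unit-demand preferences over $T$, then the firms' demand type $\mathcal{D}=\bigcup_{f\in F}\mathcal{D}_f$ is totally unimodular.
   Context: A matching market: finite firms $F$, finite workers $W$, each firm $f\in F$ has a strict, complete, transitive preference $\succ_f$ over $2^W$, and workers have preferences over firms (irrelevant here). The choice function $Ch_f(S)$ is the $\succ_f$-best subset of $S$. For $S\subseteq W$, $ind(S)\in\{0,1\}^W$ is its indicator vector. The demand type of $f$ is $\mathcal{D}_f=\{\mathbf d\in\{-1,0,1\}^W:\mathbf d\neq \mathbf 0,\ \mathbf d=ind(Ch_f(S))-ind(Ch_f(S'))\text{ for some }S'\subsetneq S\subseteq W\}$; $\mathcal D=\bigcup_{f\in F}\mathcal D_f$. A set of vectors is totally unimodular if the matrix with these vectors as columns has every square submatrix of determinant $0$ or $\pm1$. A technology tree $T=(V,E,W)$ is a directed rooted tree $(V,E)$ with root $v_0$, all edges pointing away from the root, together with a set $W^v\subseteq W$ for each vertex $v$, such that $W^{v_0}=\emptyset$ and for each edge $e$ from $v$ to $v'$, $W^v\subsetneq W^{v'}$; put $W^e=W^{v'}\setminus W^v$. A worker $w$ is a specialist in $T$ if $|\{e\in E: w\in W^e\}|=1$. Firms have unit-demand preferences over $T$ if for every $f\in F$ and $S\subseteq W$, $S\succ_f\emptyset$ implies $S=W^v$ for some $v\in V$. *)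

theory Defs
  imports Main "Jordan_Normal_Form.Determinant"
begin

(* Strict preference of firm f: (S, T) \<in> P means S \<succ>_f T.
   It must be a strict, complete, transitive order on Pow W. *)
definition strict_pref :: "'w set \<Rightarrow> ('w set \<times> 'w set) set \<Rightarrow> bool" where
  "strict_pref W P \<longleftrightarrow> P \<subseteq> Pow W \<times> Pow W \<and>
     (\<forall>S. (S, S) \<notin> P) \<and> trans P \<and>
     (\<forall>S\<in>Pow W. \<forall>T\<in>Pow W. S \<noteq> T \<longrightarrow> (S, T) \<in> P \<or> (T, S) \<in> P)"

definition Ch :: "('w set \<times> 'w set) set \<Rightarrow> 'w set \<Rightarrow> 'w set" where
  "Ch P S = (THE T. T \<subseteq> S \<and> (\<forall>T'. T' \<subseteq> S \<longrightarrow> T' \<noteq> T \<longrightarrow> (T, T') \<in> P))"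

definition ind :: "'w set \<Rightarrow> 'w \<Rightarrow> int" where
  "ind S = (\<lambda>w. if w \<in> S then 1 else 0)"

definition demand_type :: "'w set \<Rightarrow> ('w set \<times> 'w set) set \<Rightarrow> ('w \<Rightarrow> int) set" where
  "demand_type W P = {d. (\<forall>w. d w \<in> {-1, 0, 1}) \<and> d \<noteq> (\<lambda>_. 0) \<and>
      (\<exists>S S'. S' \<subset> S \<and> S \<subseteq> W \<and> d = (\<lambda>w. ind (Ch P S) w - ind (Ch P S') w))}"

definition totally_unimodular :: "'w set \<Rightarrow> ('w \<Rightarrow> int) set \<Rightarrow> bool" where
  "totally_unimodular W D \<longleftrightarrow>
     (\<forall>rs cs. distinct rs \<and> set rs \<subseteq> W \<and> distinct cs \<and> set cs \<subseteq> D \<and> length rs = length cs \<longrightarrow>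
        det (mat (length rs) (length cs) (\<lambda>(i, j). (cs ! j) (rs ! i))) \<in> {-1, 0, 1})"

definition technology_tree ::
  "'w set \<Rightarrow> 'v set \<Rightarrow> ('v \<times> 'v) set \<Rightarrow> 'v \<Rightarrow> ('v \<Rightarrow> 'w set) \<Rightarrow> bool" where
  "technology_tree W V E v0 Wv \<longleftrightarrow>
     finite V \<and> v0 \<in> V \<and> E \<subseteq> V \<times> V \<and>
     (\<forall>v\<in>V. (v0, v) \<in> E\<^sup>*) \<and>
     (\<forall>u. (u, v0) \<notin> E) \<and>
     (\<forall>v\<in>V. v \<noteq> v0 \<longrightarrow> (\<exists>!u. (u, v) \<in> E)) \<and>
     (\<forall>v\<in>V. Wv v \<subseteq> W) \<and> Wv v0 = {} \<and>
     (\<forall>(v, v')\<in>E. Wv v \<subset> Wv v')"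

definition edge_workers :: "('v \<Rightarrow> 'w set) \<Rightarrow> 'v \<times> 'v \<Rightarrow> 'w set" where
  "edge_workers Wv e = Wv (snd e) - Wv (fst e)"

definition specialist :: "('v \<times> 'v) set \<Rightarrow> ('v \<Rightarrow> 'w set) \<Rightarrow> 'w \<Rightarrow> bool" where
  "specialist E Wv w \<longleftrightarrow> card {e\<in>E. w \<in> edge_workers Wv e} = 1"

definition unit_demand :: "'f set \<Rightarrow> 'w set \<Rightarrow> ('f \<Rightarrow> ('w set \<times> 'w set) set) \<Rightarrow> 'v set \<Rightarrow> ('v \<Rightarrow> 'w set) \<Rightarrow> bool" where
  "unit_demand F W P V Wv \<longleftrightarrow>
     (\<forall>f\<in>F. \<forall>S. S \<subseteq> W \<longrightarrow> (S, {}) \<in> P f \<longrightarrow> (\<exists>v\<in>V. S = Wv v))"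

end

theory Submission
  imports Defs
begin

text \<open>Under unit demand every chosen set is the worker set \<open>W\<^sup>v\<close> of a technology \<open>v\<close> (an
  empty choice being that of the root), so every demand vector is \<open>ind W\<^sup>u - ind W\<^sup>v\<close>. Its
  entry at worker \<open>w\<close> is \<open>[u \<in> T\<^sub>w] - [v \<in> T\<^sub>w]\<close>, where \<open>T\<^sub>w\<close> is the set of technologies
  using \<open>w\<close>; a specialist enters the tree on a single edge, so \<open>T\<^sub>w\<close> is the subtree below that
  edge, and these subtrees form a laminar family. So a square submatrix has rows indexed by a
  laminar family of vertex sets and columns by vertex pairs. Take a minimal row set \<open>X\<close>: every
  other row set contains or misses \<open>X\<close>, so adding \<open>\<plusminus>\<close> one fixed column crossing \<open>X\<close> to any
  other crossing column yields the column of a pair not crossing \<open>X\<close>. Laplace expansion along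
  the row of \<open>X\<close> then leaves \<open>\<plusminus>1\<close> times a smaller matrix of the same kind.\<close>

section \<open>Laminar families and their cut matrices\<close>

definition laminar :: "'a set set \<Rightarrow> bool" where
  "laminar \<A> \<longleftrightarrow> (\<forall>X\<in>\<A>. \<forall>Y\<in>\<A>. X \<inter> Y = {} \<or> X \<subseteq> Y \<or> Y \<subseteq> X)"

lemma laminar_subset: "laminar \<A> \<Longrightarrow> \<B> \<subseteq> \<A> \<Longrightarrow> laminar \<B>"
  unfolding laminar_def by blast

lemma laminar_obtain_minimal:
  fixes n :: nat
  assumes "laminar (B ` {..<n})" and "0 < n"
  obtains e where "e < n" and "\<forall>i<n. B i \<inter> B e = {} \<or> B e \<subseteq> B i"
proof -
  have "\<exists>m\<in>B ` {..<n}. \<forall>b\<in>B ` {..<n}. b \<subseteq> m \<longrightarrow> m = b"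
    using assms(2) by (intro finite_has_minimal finite_imageI) auto
  then obtain e where e: "e < n" and min: "\<forall>i<n. B i \<subseteq> B e \<longrightarrow> B e = B i"
    by auto
  show thesis
  proof (rule that[OF e], intro allI impI)
    fix i assume "i < n"
    then have "B i \<inter> B e = {} \<or> B i \<subseteq> B e \<or> B e \<subseteq> B i"
      using assms(1) e unfolding laminar_def by simp
    with min \<open>i < n\<close> show "B i \<inter> B e = {} \<or> B e \<subseteq> B i" by blast
  qed
qed

definition cut_mat :: "(nat \<Rightarrow> 'a set) \<Rightarrow> (nat \<Rightarrow> 'a \<times> 'a) \<Rightarrow> nat \<Rightarrow> int mat" where
  "cut_mat B p n = mat n n (\<lambda>(i, j). ind (B i) (fst (p j)) - ind (B i) (snd (p j)))"

definition separates :: "'a set \<Rightarrow> 'a \<times> 'a \<Rightarrow> bool" where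
  "separates X q \<longleftrightarrow> (fst q \<in> X) \<noteq> (snd q \<in> X)"

lemma cut_mat_carrier [simp]: "cut_mat B p n \<in> carrier_mat n n"
  and dim_row_cut_mat [simp]: "dim_row (cut_mat B p n) = n"
  and dim_col_cut_mat [simp]: "dim_col (cut_mat B p n) = n"
  unfolding cut_mat_def by auto

lemma cut_mat_index [simp]:
  "i < n \<Longrightarrow> j < n \<Longrightarrow> cut_mat B p n $$ (i, j) = ind (B i) (fst (p j)) - ind (B i) (snd (p j))"
  unfolding cut_mat_def by auto

lemma ind_eq_on_disjoint_or_subset:
  "Y \<inter> X = {} \<or> X \<subseteq> Y \<Longrightarrow> x \<in> X \<Longrightarrow> y \<in> X \<Longrightarrow> ind Y x = ind Y y"
  unfolding ind_def by auto

lemma det_cut_mat_update_column: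
  assumes "j < n" and "j0 < n" and "j \<noteq> j0"
    and "\<forall>i<n. ind (B i) (fst q) - ind (B i) (snd q) =
      a * cut_mat B p n $$ (i, j0) + cut_mat B p n $$ (i, j)"
  shows "det (cut_mat B (p(j := q)) n) = det (cut_mat B p n)"
proof -
  have "cut_mat B (p(j := q)) n = addcol a j j0 (cut_mat B p n)"
    by (rule eq_matI) (use assms in auto)
  with assms(2,3) show ?thesis by simp
qed

lemma separatesE:
  assumes "separates X q"
  obtains x y s where "x \<in> X" and "y \<notin> X" and "s = 1 \<or> s = -1"
    and "\<And>Y. ind Y (fst q) - ind Y (snd q) = s * (ind Y x - ind Y y)"
proof (cases "fst q \<in> X")
  case True
  with assms show thesis
    using that[of "fst q" "snd q" 1] unfolding separates_def by simp
next
  case False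
  with assms show thesis
    using that[of "snd q" "fst q" "-1"] unfolding separates_def by simp
qed

text \<open>Column \<open>j0\<close> crosses \<open>X\<close> from \<open>x0\<close> to \<open>y0\<close>; moving the endpoint of column \<open>j\<close>
  that lies in \<open>X\<close> to \<open>y0\<close> adds \<open>\<plusminus>\<close> column \<open>j0\<close>, because every row set contains or
  misses \<open>X\<close> as a whole.\<close>
lemma det_cut_mat_reroute:
  assumes "j < n" and "j0 < n" and "j \<noteq> j0"
    and atom: "\<forall>i<n. B i \<inter> X = {} \<or> X \<subseteq> B i"
    and sep0: "separates X (p j0)" and sep: "separates X (p j)"
  obtains q where "det (cut_mat B (p(j := q)) n) = det (cut_mat B p n)" and "\<not> separates X q"
proof -
  obtain x0 y0 s where x0: "x0 \<in> X" and y0: "y0 \<notin> X" and s: "s = 1 \<or> s = -1"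
    and col0: "\<And>Y. ind Y (fst (p j0)) - ind Y (snd (p j0)) = s * (ind Y x0 - ind Y y0)"
    using separatesE[OF sep0] by blast
  obtain x y t where x: "x \<in> X" and y: "y \<notin> X" and t: "t = 1 \<or> t = -1"
    and col: "\<And>Y. ind Y (fst (p j)) - ind Y (snd (p j)) = t * (ind Y x - ind Y y)"
    using separatesE[OF sep] by blast
  define q where "q = (if t = 1 then (y0, y) else (y, y0))"
  have "\<forall>i<n. ind (B i) (fst q) - ind (B i) (snd q) =
      (- s * t) * cut_mat B p n $$ (i, j0) + cut_mat B p n $$ (i, j)"
  proof (intro allI impI)
    fix i assume i: "i < n"
    have "ind (B i) x = ind (B i) x0" using ind_eq_on_disjoint_or_subset[of "B i" X x x0] atom i x x0 by blast
    then have c: "cut_mat B p n $$ (i, j) = t * (ind (B i) x0 - ind (B i) y)"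
      using col[of "B i"] i assms(1) by simp
    have c0: "cut_mat B p n $$ (i, j0) = s * (ind (B i) x0 - ind (B i) y0)"
      using col0[of "B i"] i assms(2) by simp
    have "ind (B i) (fst q) - ind (B i) (snd q) = t * (ind (B i) y0 - ind (B i) y)"
      using t by (auto simp: q_def)
    also have "\<dots> = (- s * t) * (s * (ind (B i) x0 - ind (B i) y0)) + t * (ind (B i) x0 - ind (B i) y)"
      using s by (auto simp: algebra_simps)
    finally show "ind (B i) (fst q) - ind (B i) (snd q) =
      (- s * t) * cut_mat B p n $$ (i, j0) + cut_mat B p n $$ (i, j)"
      unfolding c c0 .
  qed
  then have "det (cut_mat B (p(j := q)) n) = det (cut_mat B p n)"
    by (rule det_cut_mat_update_column[OF assms(1-3)])
  moreover have "\<not> separates X q" using y y0 by (simp add: q_def separates_def)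
  ultimately show thesis by (rule that)
qed

lemma cut_mat_clear_crossings:
  assumes "J \<subseteq> {..<n} - {j0}" and "j0 < n"
    and atom: "\<forall>i<n. B i \<inter> X = {} \<or> X \<subseteq> B i"
    and sep0: "separates X (p j0)"
  shows "\<exists>p'. det (cut_mat B p' n) = det (cut_mat B p n) \<and>
    (\<forall>j\<in>J. \<not> separates X (p' j)) \<and> (\<forall>j. j \<notin> J \<longrightarrow> p' j = p j)"
  using finite_subset[OF assms(1), simplified] assms(1)
proof (induction J rule: finite_induct)
  case empty
  show ?case by blast
next
  case (insert j J)
  then obtain p' where det': "det (cut_mat B p' n) = det (cut_mat B p n)"
    and clear: "\<forall>j\<in>J. \<not> separates X (p' j)" and same: "\<forall>j. j \<notin> J \<longrightarrow> p' j = p j"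
    by auto
  have j: "j < n" "j \<noteq> j0" and "j0 \<notin> J" using insert.prems by auto
  show ?case
  proof (cases "separates X (p' j)")
    case False
    with det' clear same show ?thesis by (intro exI[of _ p']) auto
  next
    case True
    have "separates X (p' j0)" using sep0 same \<open>j0 \<notin> J\<close> by simp
    then obtain q where "det (cut_mat B (p'(j := q)) n) = det (cut_mat B p' n)"
      and "\<not> separates X q"
      using det_cut_mat_reroute[where p = p', OF j(1) \<open>j0 < n\<close> j(2) atom _ True] by blast
    moreover have "\<forall>k\<in>insert j J. \<not> separates X ((p'(j := q)) k)"
      using clear \<open>\<not> separates X q\<close> by simp
    moreover have "\<forall>k. k \<notin> insert j J \<longrightarrow> (p'(j := q)) k = p k"
      using same by simp
    ultimately show ?thesis using det' by metis
  qed
qed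

lemma det_cut_mat_uncrossed_row:
  assumes "e < n" and "\<forall>j<n. \<not> separates (B e) (p j)"
  shows "det (cut_mat B p n) = 0"
proof -
  have "det (cut_mat B p n) = (\<Sum>j<n. cut_mat B p n $$ (e, j) * cofactor (cut_mat B p n) e j)"
    by (rule laplace_expansion_row[OF cut_mat_carrier assms(1)])
  also have "\<dots> = 0"
    using assms by (intro sum.neutral) (auto simp: separates_def ind_def)
  finally show ?thesis .
qed

lemma mat_delete_cut_mat:
  assumes "e < Suc n" and "j0 < Suc n"
  shows "mat_delete (cut_mat B p (Suc n)) e j0 = cut_mat (B \<circ> insert_index e) (p \<circ> insert_index j0) n"
proof (rule eq_matI)
  fix i j assume "i < dim_row (cut_mat (B \<circ> insert_index e) (p \<circ> insert_index j0) n)"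
    and "j < dim_col (cut_mat (B \<circ> insert_index e) (p \<circ> insert_index j0) n)"
  with assms show "mat_delete (cut_mat B p (Suc n)) e j0 $$ (i, j) =
      cut_mat (B \<circ> insert_index e) (p \<circ> insert_index j0) n $$ (i, j)"
    by (simp add: mat_delete_def insert_index_def)
qed simp_all

lemma det_cut_mat_single_crossing:
  assumes e: "e < Suc n" and j0: "j0 < Suc n"
    and "\<forall>j<Suc n. j \<noteq> j0 \<longrightarrow> \<not> separates (B e) (p j)"
  shows "det (cut_mat B p (Suc n)) = cut_mat B p (Suc n) $$ (e, j0) * (-1) ^ (e + j0) *
    det (cut_mat (B \<circ> insert_index e) (p \<circ> insert_index j0) n)"
proof -
  let ?A = "cut_mat B p (Suc n)"
  have "det ?A = (\<Sum>j<Suc n. ?A $$ (e, j) * cofactor ?A e j)"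
    by (rule laplace_expansion_row[OF cut_mat_carrier e])
  also have "\<dots> = (\<Sum>j\<in>{j0}. ?A $$ (e, j) * cofactor ?A e j)"
    using assms by (intro sum.mono_neutral_right) (auto simp: separates_def ind_def)
  finally show ?thesis
    by (simp add: cofactor_def mat_delete_cut_mat[OF e j0])
qed

lemma det_cut_mat_laminar:
  assumes "laminar (B ` {..<n})"
  shows "det (cut_mat B p n) \<in> {-1, 0, 1}"
  using assms
proof (induction n arbitrary: B p)
  case 0
  show ?case by simp
next
  case (Suc n)
  obtain e where e: "e < Suc n" and atom: "\<forall>i<Suc n. B i \<inter> B e = {} \<or> B e \<subseteq> B i"
    using laminar_obtain_minimal[OF Suc.prems] by blast
  show ?case
  proof (cases "\<exists>j0<Suc n. separates (B e) (p j0)")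
    case False
    then show ?thesis using det_cut_mat_uncrossed_row[of e "Suc n" B p] e by simp
  next
    case True
    then obtain j0 where j0: "j0 < Suc n" and sep0: "separates (B e) (p j0)" by blast
    obtain p' where det': "det (cut_mat B p' (Suc n)) = det (cut_mat B p (Suc n))"
      and clear: "\<forall>j\<in>{..<Suc n} - {j0}. \<not> separates (B e) (p' j)" and "p' j0 = p j0"
      using cut_mat_clear_crossings[where J = "{..<Suc n} - {j0}" and p = p, OF _ j0 atom sep0] by auto
    have "cut_mat B p' (Suc n) $$ (e, j0) \<in> {-1, 1}"
      using sep0 \<open>p' j0 = p j0\<close> e j0 by (auto simp: separates_def ind_def)
    moreover have "(-1 :: int) ^ (e + j0) \<in> {-1, 1}"
      by (cases "even (e + j0)") auto
    moreover have "laminar ((B \<circ> insert_index e) ` {..<n})"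
      by (rule laminar_subset[OF Suc.prems]) (use e in \<open>auto simp: insert_index_def\<close>)
    then have "det (cut_mat (B \<circ> insert_index e) (p' \<circ> insert_index j0) n) \<in> {-1, 0, 1}"
      by (rule Suc.IH)
    ultimately show ?thesis
      using det_cut_mat_single_crossing[OF e j0, of B p'] clear det' by auto
  qed
qed

lemma totally_unimodular_node_differences:
  fixes W :: "'w set" and V :: "'v set" and L :: "'v \<Rightarrow> 'w set"
  assumes lam: "laminar ((\<lambda>w. {x\<in>V. w \<in> L x}) ` W)"
    and cols: "\<forall>d\<in>D. \<exists>u\<in>V. \<exists>v\<in>V. d = (\<lambda>w. ind (L u) w - ind (L v) w)"
  shows "totally_unimodular W D"
  unfolding totally_unimodular_def
proof (intro allI impI)
  fix rs :: "'w list" and cs :: "('w \<Rightarrow> int) list"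
  assume H: "distinct rs \<and> set rs \<subseteq> W \<and> distinct cs \<and> set cs \<subseteq> D \<and> length rs = length cs"
  let ?n = "length rs"
  have rows: "rs ! i \<in> W" if "i < ?n" for i
    using H that nth_mem by blast
  have "\<forall>j\<in>{..<?n}. \<exists>uv. fst uv \<in> V \<and> snd uv \<in> V \<and>
      cs ! j = (\<lambda>w. ind (L (fst uv)) w - ind (L (snd uv)) w)"
  proof
    fix j assume "j \<in> {..<?n}"
    then have "cs ! j \<in> D" using H nth_mem by (metis lessThan_iff subsetD)
    with cols obtain u v where "u \<in> V" "v \<in> V" "cs ! j = (\<lambda>w. ind (L u) w - ind (L v) w)"
      by blast
    then show "\<exists>uv. fst uv \<in> V \<and> snd uv \<in> V \<and>
      cs ! j = (\<lambda>w. ind (L (fst uv)) w - ind (L (snd uv)) w)"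
      by (intro exI[of _ "(u, v)"]) simp
  qed
  from bchoice[OF this] obtain p where p: "\<forall>j\<in>{..<?n}. fst (p j) \<in> V \<and> snd (p j) \<in> V \<and>
      cs ! j = (\<lambda>w. ind (L (fst (p j))) w - ind (L (snd (p j))) w)"
    by blast
  define B where "B i = {x\<in>V. rs ! i \<in> L x}" for i
  have "mat ?n (length cs) (\<lambda>(i, j). (cs ! j) (rs ! i)) = cut_mat B p ?n"
    by (rule eq_matI) (use H p in \<open>auto simp: B_def ind_def\<close>)
  moreover have "laminar (B ` {..<?n})"
    by (rule laminar_subset[OF lam]) (auto simp: B_def intro!: image_eqI[OF refl rows])
  ultimately show "det (mat ?n (length cs) (\<lambda>(i, j). (cs ! j) (rs ! i))) \<in> {-1, 0, 1}"
    using det_cut_mat_laminar by metis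
qed

section \<open>Choice under unit demand\<close>

lemma strict_prefD:
  assumes "strict_pref W P"
  shows strict_pref_irrefl: "(S, S) \<notin> P"
    and strict_pref_trans: "trans P"
    and strict_pref_total: "S \<subseteq> W \<Longrightarrow> T \<subseteq> W \<Longrightarrow> S \<noteq> T \<Longrightarrow> (S, T) \<in> P \<or> (T, S) \<in> P"
  using assms unfolding strict_pref_def by blast+

lemma strict_pref_has_best:
  assumes "strict_pref W P" and "S \<subseteq> W" and "finite W"
  shows "\<exists>T\<subseteq>S. \<forall>T'\<subseteq>S. T' \<noteq> T \<longrightarrow> (T, T') \<in> P"
proof -
  have tr: "(X, Z) \<in> P" if "(X, Y) \<in> P" and "(Y, Z) \<in> P" for X Y Z
    using strict_pref_trans[OF assms(1)] that by (rule transD)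
  have "\<exists>T\<in>Pow S. \<forall>T'\<in>Pow S. T' \<noteq> T \<longrightarrow> (T', T) \<notin> P"
  proof (rule Finite_Set.bex_min_element)
    show "finite (Pow S)" using finite_subset[OF assms(2,3)] by simp
    show "asymp_on (Pow S) (\<lambda>X Y. (X, Y) \<in> P)"
      using tr strict_pref_irrefl[OF assms(1)] unfolding asymp_on_def by blast
    show "transp_on (Pow S) (\<lambda>X Y. (X, Y) \<in> P)"
      using tr unfolding transp_on_def by blast
  qed blast
  then obtain T where T: "T \<subseteq> S" and unbeaten: "\<forall>T'\<subseteq>S. T' \<noteq> T \<longrightarrow> (T', T) \<notin> P"
    by auto
  have "(T, T') \<in> P" if "T' \<subseteq> S" and "T' \<noteq> T" for T'
    using strict_pref_total[OF assms(1), of T T'] unbeaten T that assms(2) by auto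
  with T show ?thesis by blast
qed

lemma Ch_is_best:
  assumes "strict_pref W P" and "S \<subseteq> W" and "finite W"
  shows "Ch P S \<subseteq> S \<and> (\<forall>T'\<subseteq>S. T' \<noteq> Ch P S \<longrightarrow> (Ch P S, T') \<in> P)"
proof -
  have "\<exists>!T. T \<subseteq> S \<and> (\<forall>T'\<subseteq>S. T' \<noteq> T \<longrightarrow> (T, T') \<in> P)"
  proof (rule ex_ex1I)
    show "\<exists>T. T \<subseteq> S \<and> (\<forall>T'\<subseteq>S. T' \<noteq> T \<longrightarrow> (T, T') \<in> P)"
      using strict_pref_has_best[OF assms] by blast
  next
    fix T1 T2
    assume best1: "T1 \<subseteq> S \<and> (\<forall>T'\<subseteq>S. T' \<noteq> T1 \<longrightarrow> (T1, T') \<in> P)"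
      and best2: "T2 \<subseteq> S \<and> (\<forall>T'\<subseteq>S. T' \<noteq> T2 \<longrightarrow> (T2, T') \<in> P)"
    show "T1 = T2"
    proof (rule ccontr)
      assume "T1 \<noteq> T2"
      with best1 best2 have "(T1, T2) \<in> P" and "(T2, T1) \<in> P" by auto
      with strict_pref_trans[OF assms(1)] have "(T1, T1) \<in> P" by (rule transD)
      with strict_pref_irrefl[OF assms(1)] show False by blast
    qed
  qed
  then show ?thesis
    unfolding Ch_def by (rule theI')
qed

lemma Ch_unit_demand_node:
  assumes "strict_pref W (P f)" and "S \<subseteq> W" and "finite W"
    and "unit_demand F W P V Wv" and "f \<in> F" and "v0 \<in> V" and "Wv v0 = {}"
  shows "\<exists>v\<in>V. Ch (P f) S = Wv v"
proof (cases "Ch (P f) S = {}")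
  case True
  with assms(6,7) show ?thesis by auto
next
  case False
  with Ch_is_best[OF assms(1-3)] have "(Ch (P f) S, {}) \<in> P f" and "Ch (P f) S \<subseteq> W"
    using assms(2) by auto
  with assms(4,5) show ?thesis unfolding unit_demand_def by simp
qed

lemma demand_types_node_differences:
  assumes "\<forall>f\<in>F. strict_pref W (P f)" and "finite W"
    and "unit_demand F W P V Wv" and "v0 \<in> V" and "Wv v0 = {}"
    and "d \<in> (\<Union>f\<in>F. demand_type W (P f))"
  shows "\<exists>u\<in>V. \<exists>v\<in>V. d = (\<lambda>w. ind (Wv u) w - ind (Wv v) w)"
proof -
  obtain f S S' where "f \<in> F" and "S' \<subset> S" and "S \<subseteq> W"
    and d: "d = (\<lambda>w. ind (Ch (P f) S) w - ind (Ch (P f) S') w)"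
    using assms(6) unfolding demand_type_def by blast
  have f: "strict_pref W (P f)" using assms(1) \<open>f \<in> F\<close> by blast
  have "S' \<subseteq> W" using \<open>S' \<subset> S\<close> \<open>S \<subseteq> W\<close> by blast
  obtain u where "u \<in> V" and u: "Ch (P f) S = Wv u"
    using Ch_unit_demand_node[OF f \<open>S \<subseteq> W\<close> assms(2,3) \<open>f \<in> F\<close> assms(4,5)] by blast
  moreover obtain v where "v \<in> V" and v: "Ch (P f) S' = Wv v"
    using Ch_unit_demand_node[OF f \<open>S' \<subseteq> W\<close> assms(2,3) \<open>f \<in> F\<close> assms(4,5)] by blast
  ultimately show ?thesis unfolding d u v by blast
qed

section \<open>Technology trees\<close>

lemma laminar_descendant_sets:
  assumes "single_valued (E\<inverse>)"
  shows "laminar (range (\<lambda>b. {x\<in>V. (b, x) \<in> E\<^sup>*}))"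
  unfolding laminar_def
proof (intro ballI)
  fix X Y assume "X \<in> range (\<lambda>b. {x\<in>V. (b, x) \<in> E\<^sup>*})" and "Y \<in> range (\<lambda>b. {x\<in>V. (b, x) \<in> E\<^sup>*})"
  then obtain b c where X: "X = {x\<in>V. (b, x) \<in> E\<^sup>*}" and Y: "Y = {x\<in>V. (c, x) \<in> E\<^sup>*}"
    by blast
  show "X \<inter> Y = {} \<or> X \<subseteq> Y \<or> Y \<subseteq> X"
  proof (cases "X \<inter> Y = {}")
    case False
    then obtain x where "(b, x) \<in> E\<^sup>*" and "(c, x) \<in> E\<^sup>*"
      using X Y by blast
    then have "(x, b) \<in> (E\<inverse>)\<^sup>*" and "(x, c) \<in> (E\<inverse>)\<^sup>*"
      by (simp_all add: rtrancl_converseI)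
    then have "(b, c) \<in> (E\<inverse>)\<^sup>* \<or> (c, b) \<in> (E\<inverse>)\<^sup>*"
      by (rule single_valued_confluent[OF assms])
    then have "(c, b) \<in> E\<^sup>* \<or> (b, c) \<in> E\<^sup>*"
      by (auto dest: rtrancl_converseD)
    then show ?thesis
    proof
      assume "(c, b) \<in> E\<^sup>*"
      then have "X \<subseteq> Y" unfolding X Y by (blast intro: rtrancl_trans)
      then show ?thesis by blast
    next
      assume "(b, c) \<in> E\<^sup>*"
      then have "Y \<subseteq> X" unfolding X Y by (blast intro: rtrancl_trans)
      then show ?thesis by blast
    qed
  qed simp
qed

lemma edge_workers_first_entry:
  assumes "(u, x) \<in> E\<^sup>*" and "w \<notin> Wv u" and "w \<in> Wv x"
  shows "\<exists>e\<in>E. w \<in> edge_workers Wv e \<and> (snd e, x) \<in> E\<^sup>*"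
  using assms
proof (induction rule: rtrancl_induct)
  case base
  then show ?case by simp
next
  case (step y z)
  show ?case
  proof (cases "w \<in> Wv y")
    case True
    with step.IH step.prems(1) obtain e where "e \<in> E" "w \<in> edge_workers Wv e" "(snd e, y) \<in> E\<^sup>*"
      by blast
    with step.hyps(2) show ?thesis by (meson rtrancl_into_rtrancl)
  next
    case False
    with step.hyps(2) step.prems(2) show ?thesis
      by (intro bexI[of _ "(y, z)"]) (auto simp: edge_workers_def)
  qed
qed

context
  fixes W :: "'w set" and V :: "'v set" and E and v0 and Wv
  assumes tree: "technology_tree W V E v0 Wv"
begin

lemma technology_tree_single_valued_converse: "single_valued (E\<inverse>)"
proof (rule single_valuedI)
  fix x y z assume "(x, y) \<in> E\<inverse>" and "(x, z) \<in> E\<inverse>"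
  then have "(y, x) \<in> E" and "(z, x) \<in> E" by auto
  moreover from this have "x \<in> V" and "x \<noteq> v0"
    using tree unfolding technology_tree_def by auto
  ultimately show "y = z"
    using tree unfolding technology_tree_def by blast
qed

lemma technology_tree_labels_mono: "(a, b) \<in> E\<^sup>* \<Longrightarrow> Wv a \<subseteq> Wv b"
proof (induction rule: rtrancl_induct)
  case (step y z)
  with tree show ?case unfolding technology_tree_def by blast
qed simp

lemma specialist_technologies_eq_subtree:
  assumes "specialist E Wv w"
  shows "\<exists>b. \<forall>x\<in>V. w \<in> Wv x \<longleftrightarrow> (b, x) \<in> E\<^sup>*"
proof -
  obtain e where e: "{e\<in>E. w \<in> edge_workers Wv e} = {e}"
    using assms unfolding specialist_def by (meson card_1_singletonE)
  have "w \<in> Wv x \<longleftrightarrow> (snd e, x) \<in> E\<^sup>*" if "x \<in> V" for x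
  proof
    assume "w \<in> Wv x"
    have "(v0, x) \<in> E\<^sup>*" and "w \<notin> Wv v0"
      using tree that unfolding technology_tree_def by auto
    then have "\<exists>e'\<in>E. w \<in> edge_workers Wv e' \<and> (snd e', x) \<in> E\<^sup>*"
      using \<open>w \<in> Wv x\<close> by (rule edge_workers_first_entry)
    then obtain e' where "e' \<in> {e\<in>E. w \<in> edge_workers Wv e}" and "(snd e', x) \<in> E\<^sup>*"
      by auto
    with e show "(snd e, x) \<in> E\<^sup>*" by simp
  next
    assume "(snd e, x) \<in> E\<^sup>*"
    then have "Wv (snd e) \<subseteq> Wv x" by (rule technology_tree_labels_mono)
    moreover have "e \<in> {e\<in>E. w \<in> edge_workers Wv e}" using e by simp
    ultimately show "w \<in> Wv x" unfolding edge_workers_def by auto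
  qed
  then show ?thesis by blast
qed

lemma laminar_specialist_technologies:
  assumes "\<forall>w\<in>W. specialist E Wv w"
  shows "laminar ((\<lambda>w. {x\<in>V. w \<in> Wv x}) ` W)"
proof (rule laminar_subset[OF laminar_descendant_sets[OF technology_tree_single_valued_converse]])
  show "(\<lambda>w. {x\<in>V. w \<in> Wv x}) ` W \<subseteq> range (\<lambda>b. {x\<in>V. (b, x) \<in> E\<^sup>*})"
  proof
    fix X assume "X \<in> (\<lambda>w. {x\<in>V. w \<in> Wv x}) ` W"
    then obtain w where "w \<in> W" and X: "X = {x\<in>V. w \<in> Wv x}" by blast
    then obtain b where "\<forall>x\<in>V. w \<in> Wv x \<longleftrightarrow> (b, x) \<in> E\<^sup>*"
      using assms specialist_technologies_eq_subtree by blast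
    then have "X = {x\<in>V. (b, x) \<in> E\<^sup>*}" unfolding X by blast
    then show "X \<in> range (\<lambda>b. {x\<in>V. (b, x) \<in> E\<^sup>*})" by blast
  qed
qed

end

theorem theorem2:
  fixes F :: "'f set" and W :: "'w set"
    and P :: "'f \<Rightarrow> ('w set \<times> 'w set) set"
    and V :: "'v set" and E :: "('v \<times> 'v) set" and v0 :: 'v and Wv :: "'v \<Rightarrow> 'w set"
  assumes "finite F" and "finite W"
    and "\<forall>f\<in>F. strict_pref W (P f)"
    and "technology_tree W V E v0 Wv"
    and "\<forall>w\<in>W. specialist E Wv w"
    and "unit_demand F W P V Wv"
  shows "totally_unimodular W (\<Union>f\<in>F. demand_type W (P f))"
proof (rule totally_unimodular_node_differences)
  show "laminar ((\<lambda>w. {x\<in>V. w \<in> Wv x}) ` W)"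
    using laminar_specialist_technologies[OF assms(4,5)] .
  have "v0 \<in> V" and "Wv v0 = {}"
    using assms(4) unfolding technology_tree_def by auto
  then show "\<forall>d\<in>\<Union>f\<in>F. demand_type W (P f). \<exists>u\<in>V. \<exists>v\<in>V. d = (\<lambda>w. ind (Wv u) w - ind (Wv v) w)"
    using demand_types_node_differences[OF assms(3,2,6)] by blast
qed

end
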